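(* Let $D$ be a knot diagram, let $2\le k\le\infty$, and let $M$ be the game matrix of some version of the $k$-color region select game on $D$. If $\boldsymbol\ell$ is a null pattern of $M$ with $\boldsymbol\ell(r_1)=\boldsymbol\ell(r_2)=0$ for two adjacent regions $r_1,r_2$ of $D$, then $\boldsymbol\ell=\mathbf 0$.
   Context: Diagrams: a link (knot) diagram $D$ is the underlying graph of a regular projection of a link (knot) into $S^2$. Its vertices are the crossings, each of valence 4, and over/under information is ignored. Components without crossings are closed loops, each regarded as one edge with no vertices. Regions of $D$ are the connected components of $S^2\setminus D$. A vertex or edge is incident to a region if it lies in the boundary of that region. Two regions are adjacent if they are incident to a common edge. A vertex $v$ is reducible if some circle in $S^2$ meets $D$ transversely only at $v$, and irreducible otherwise. An irreducible vertex is incident to four distinct regions. A reducible vertex $v$ is incident to exactly three regions $r_0,r_1,r_2$, where $r_0$ touches $v$ from two sides and $r_1,r_2$ touch it from one side. A knot diagram with $n$ vertices has $n+2$ regions. A knot diagram is reduced if all its vertices are irreducible. Ring: for an integer $k\ge2$ let $\mathbb{Z}_k=\mathbb{Z}/k\mathbb{Z}$, and for $k=\infty$ let $\mathbb{Z}_\infty=\mathbb{Z}$. Game versions: a version of the $k$-color region select game on $D$ is a choice of an increment number $a(v,r)\in\mathbb{Z}_k$ for every incident vertex–region pair, subject to the following rules. - If $k<\infty$ and $v$ is irreducible, then $a(v,r)=a_v$ is the same for all regions $r$ incident to $v$, and $a_v$ is not a zero divisor of $\mathbb{Z}_k$. - If $k<\infty$ and $v$ is reducible, then $a(v,r_0)$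 is arbitrary, while $a(v,r_1)$ and $a(v,r_2)$ are not zero divisors. - If $k=\infty$, then $a(v,r)=1$, except that $a(v,r_0)\in\mathbb{Z}$ is arbitrary when $v$ is reducible. - The original game is the version in which all increment numbers equal $1$. Game matrix: enumerate the vertices as $v_1,\dots,v_n$ and the regions as $r_1,\dots,r_m$. The game matrix is the $n\times m$ matrix $M$ over $\mathbb{Z}_k$ with $M_{ij}=a(v_i,r_j)$ if $v_i$ is incident to $r_j$, and $M_{ij}=0$ otherwise. Patterns and configurations: a push pattern is a vector $\mathbf p\in\mathbb{Z}_k^m$, and $\mathbf p(r_j)=p_j$ is the number of times $r_j$ is pushed. A region $r$ is not pushed in $\mathbf p$ if $\mathbf p(r)=0$. A color configuration is a vector $\mathbf c\in\mathbb{Z}_k^n$. Applying $\mathbf p$ to $\mathbf c$ yields $\mathbf c+M\mathbf p$. The configuration $\mathbf c$ is solvable if some $\mathbf p$ satisfies $M\mathbf p=-\mathbf c$; such a $\mathbf p$ is a solving pattern for $\mathbf c$. $D$ is always solvable in the version if every $\mathbf c\in\mathbb{Z}_k^n$ is solvable. A null pattern is an element of $Ker_k(M)=\{\mathbf p\in\mathbb{Z}_k^m: M\mathbf p=0\}$. *)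

theory Defs
  imports Main "HOL-Library.Extended_Nat" "HOL-Number_Theory.Cong"
begin

text \<open>
Combinatorial encoding of a knot diagram (with at least one crossing) as a
combinatorial map: a finite set of darts H, a vertex rotation sigma whose
orbits are the crossings (each of size 4), and a fixed-point-free involution
alpha pairing darts into edges.  The dart d marks the corner of its vertex that lies in
the region of d.  Planarity is the Euler formula V - E + F = 2, and being a
knot (one component) means that the straight-ahead moves (sigma twice) together
with alpha connect all darts.
\<close>

definition orb :: "('d \<Rightarrow> 'd) \<Rightarrow> 'd \<Rightarrow> 'd set" where
  "orb f x = {(f ^^ n) x | n. True}"

definition dvertices :: "'d set \<Rightarrow> ('d \<Rightarrow> 'd) \<Rightarrow> 'd set set" where
  "dvertices H \<sigma> = {orb \<sigma> d | d. d \<in> H}"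

definition dedges :: "'d set \<Rightarrow> ('d \<Rightarrow> 'd) \<Rightarrow> 'd set set" where
  "dedges H \<alpha> = {{d, \<alpha> d} | d. d \<in> H}"

definition dregions :: "'d set \<Rightarrow> ('d \<Rightarrow> 'd) \<Rightarrow> ('d \<Rightarrow> 'd) \<Rightarrow> 'd set set" where
  "dregions H \<sigma> \<alpha> = {orb (\<sigma> \<circ> \<alpha>) d | d. d \<in> H}"

definition straight_step :: "('d \<Rightarrow> 'd) \<Rightarrow> ('d \<Rightarrow> 'd) \<Rightarrow> 'd \<Rightarrow> 'd \<Rightarrow> bool" where
  "straight_step \<sigma> \<alpha> x y \<longleftrightarrow> y = \<sigma> (\<sigma> x) \<or> y = \<alpha> x"

definition knot_diagram :: "'d set \<Rightarrow> ('d \<Rightarrow> 'd) \<Rightarrow> ('d \<Rightarrow> 'd) \<Rightarrow> bool" where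
  "knot_diagram H \<sigma> \<alpha> \<longleftrightarrow>
     finite H \<and> H \<noteq> {} \<and>
     bij_betw \<sigma> H H \<and>
     (\<forall>d\<in>H. card (orb \<sigma> d) = 4) \<and>
     (\<forall>d\<in>H. \<alpha> d \<in> H \<and> \<alpha> d \<noteq> d \<and> \<alpha> (\<alpha> d) = d) \<and>
     int (card (dvertices H \<sigma>)) - int (card (dedges H \<alpha>))
        + int (card (dregions H \<sigma> \<alpha>)) = 2 \<and>
     (\<forall>d\<in>H. \<forall>e\<in>H. (straight_step \<sigma> \<alpha>)\<^sup>*\<^sup>* d e)"

definition incident :: "'d set \<Rightarrow> 'd set \<Rightarrow> bool" where
  "incident v r \<longleftrightarrow> v \<inter> r \<noteq> {}"

definition irreducible_vertex :: "'d set \<Rightarrow> ('d \<Rightarrow> 'd) \<Rightarrow> ('d \<Rightarrow> 'd) \<Rightarrow> 'd set \<Rightarrow> bool" where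
  "irreducible_vertex H \<sigma> \<alpha> v \<longleftrightarrow> card {r \<in> dregions H \<sigma> \<alpha>. incident v r} = 4"

definition adjacent :: "'d set \<Rightarrow> ('d \<Rightarrow> 'd) \<Rightarrow> 'd set \<Rightarrow> 'd set \<Rightarrow> bool" where
  "adjacent H \<alpha> r1 r2 \<longleftrightarrow> (\<exists>d\<in>H. d \<in> r1 \<and> \<alpha> d \<in> r2)"

text \<open>The ring Z_k is modelled by integers modulo m, where m = k for finite k
and m = 0 (i.e. plain equality in Z) for k = infinity.\<close>
definition modulus :: "enat \<Rightarrow> int" where
  "modulus k = (case k of enat n \<Rightarrow> int n | \<infinity> \<Rightarrow> 0)"

definition zero_divisor_mod :: "int \<Rightarrow> int \<Rightarrow> bool" where
  "zero_divisor_mod m a \<longleftrightarrow> (\<exists>b. \<not> [b = 0] (mod m) \<and> [a * b = 0] (mod m))"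

text \<open>A version of the k-colour region select game: increments a v r for each
incident vertex-region pair.  A region r touches v from exactly one side iff
exactly one corner of v lies in r.\<close>
definition game_version ::
  "enat \<Rightarrow> 'd set \<Rightarrow> ('d \<Rightarrow> 'd) \<Rightarrow> ('d \<Rightarrow> 'd) \<Rightarrow> ('d set \<Rightarrow> 'd set \<Rightarrow> int) \<Rightarrow> bool" where
  "game_version k H \<sigma> \<alpha> a \<longleftrightarrow>
    (if k = \<infinity> then
       (\<forall>v\<in>dvertices H \<sigma>. \<forall>r\<in>dregions H \<sigma> \<alpha>. incident v r \<longrightarrow>
          (irreducible_vertex H \<sigma> \<alpha> v \<or> card (v \<inter> r) = 1) \<longrightarrow> a v r = 1)
     else
       (\<forall>v\<in>dvertices H \<sigma>.
          (irreducible_vertex H \<sigma> \<alpha> v \<longrightarrow>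
             (\<exists>c. \<not> zero_divisor_mod (modulus k) c \<and>
                (\<forall>r\<in>dregions H \<sigma> \<alpha>. incident v r \<longrightarrow> [a v r = c] (mod modulus k)))) \<and>
          (\<not> irreducible_vertex H \<sigma> \<alpha> v \<longrightarrow>
             (\<forall>r\<in>dregions H \<sigma> \<alpha>. card (v \<inter> r) = 1 \<longrightarrow>
                \<not> zero_divisor_mod (modulus k) (a v r)))))"

definition game_apply ::
  "'d set \<Rightarrow> ('d \<Rightarrow> 'd) \<Rightarrow> ('d \<Rightarrow> 'd) \<Rightarrow> ('d set \<Rightarrow> 'd set \<Rightarrow> int) \<Rightarrow> ('d set \<Rightarrow> int) \<Rightarrow> 'd set \<Rightarrow> int" where
  "game_apply H \<sigma> \<alpha> a p v = (\<Sum>r\<in>{r \<in> dregions H \<sigma> \<alpha>. incident v r}. a v r * p r)"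

definition null_pattern ::
  "enat \<Rightarrow> 'd set \<Rightarrow> ('d \<Rightarrow> 'd) \<Rightarrow> ('d \<Rightarrow> 'd) \<Rightarrow> ('d set \<Rightarrow> 'd set \<Rightarrow> int) \<Rightarrow> ('d set \<Rightarrow> int) \<Rightarrow> bool" where
  "null_pattern k H \<sigma> \<alpha> a p \<longleftrightarrow>
     (\<forall>v\<in>dvertices H \<sigma>. [game_apply H \<sigma> \<alpha> a p v = 0] (mod modulus k))"

end

theory Submission
  imports Defs
begin

text \<open>
  The null pattern \<open>l\<close> is followed through edge sums: at a corner \<open>d\<close> of a crossing,
  \<open>l (F d) + l (F (\<sigma> d))\<close> adds up \<open>l\<close> over the two regions on either side of the edge
  leaving the crossing between the corners \<open>d\<close> and \<open>\<sigma> d\<close>. It is the same at both ends of an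
  edge; at an irreducible crossing the null equation, divided by the common increment, says
  that the four surrounding values of \<open>l\<close> add up to zero, so opposite edge sums are negatives
  of each other; at a reducible crossing the two edges paired by the smoothing border the same
  two regions, so their edge sums agree. So the vanishing of edge sums spreads along every
  circle of the state that smooths the reducible crossings and runs straight through the
  others.

  The topological core is that in this state the corners \<open>e\<close> and \<open>\<sigma> e\<close> of every irreducible
  crossing lie on one circle. This is proved by smoothing the reducible crossings one at a
  time, using a mod-2 Jordan curve theorem: every set of edges meeting each crossing evenly
  bounds a set of regions, which follows from Euler's formula by counting dimensions. Starting
  from the two adjacent regions where \<open>l\<close> vanishes, the vanishing then passes across every
  crossing, at reducible ones by their null equation, and connectedness of the knot carries it
  to all regions.
\<close>

section \<open>Orbits of an injective self-map of a finite set\<close>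

lemma funpow_in: "f ` A \<subseteq> A \<Longrightarrow> x \<in> A \<Longrightarrow> (f ^^ n) x \<in> A"
  by (induction n) auto

lemma inj_on_funpow:
  assumes "inj_on f A" "f ` A \<subseteq> A" shows "inj_on (f ^^ n) A"
proof (induction n)
  case (Suc n)
  have "(f ^^ n) ` A \<subseteq> A" using funpow_in[OF assms(2)] by blast
  hence "inj_on (f \<circ> (f ^^ n)) A"
    using Suc inj_on_subset[OF assms(1)] by (intro comp_inj_on) auto
  thus ?case by (simp add: comp_def)
qed simp

definition period :: "('a \<Rightarrow> 'a) \<Rightarrow> 'a \<Rightarrow> nat" where
  "period f x = (LEAST n. 0 < n \<and> (f ^^ n) x = x)"

locale perm_on =
  fixes A :: "'a set" and f :: "'a \<Rightarrow> 'a"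
  assumes finite: "finite A" and inj: "inj_on f A" and maps: "f ` A \<subseteq> A"
begin

lemma funpow_in_A: "x \<in> A \<Longrightarrow> (f ^^ n) x \<in> A"
  using funpow_in[OF maps] by blast

lemma funpow_eq_imp_funpow_diff:
  assumes "x \<in> A" "i \<le> j" "(f ^^ i) x = (f ^^ j) x" shows "(f ^^ (j - i)) x = x"
proof -
  have "(f ^^ i) ((f ^^ (j - i)) x) = (f ^^ i) x"
    using assms(2,3) by (metis add_diff_inverse_nat comp_apply funpow_add leD)
  thus ?thesis
    using inj_on_funpow[OF inj maps, of i] assms(1) funpow_in_A by (auto simp: inj_on_def)
qed

lemma funpow_returns:
  assumes "x \<in> A" shows "\<exists>n>0. (f ^^ n) x = x"
proof -
  let ?g = "\<lambda>i. (f ^^ i) x"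
  have "?g ` {..card A} \<subseteq> A" using funpow_in_A[OF assms] by auto
  hence "card (?g ` {..card A}) \<le> card A" using finite card_mono by blast
  hence "\<not> inj_on ?g {..card A}" using card_image by fastforce
  then obtain i j where "i < j" "?g i = ?g j"
    unfolding inj_on_def by (metis linorder_neqE_nat)
  thus ?thesis using funpow_eq_imp_funpow_diff[OF assms, of i j] by (intro exI[of _ "j - i"]) auto
qed

lemma period_pos: "x \<in> A \<Longrightarrow> 0 < period f x"
  and funpow_period: "x \<in> A \<Longrightarrow> (f ^^ period f x) x = x"
  using LeastI_ex[OF funpow_returns] unfolding period_def by blast+

lemma funpow_neq_less_period: "0 < n \<Longrightarrow> n < period f x \<Longrightarrow> (f ^^ n) x \<noteq> x"
  unfolding period_def using not_less_Least by blast

lemma funpow_mod_period: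
  assumes "x \<in> A" shows "(f ^^ (n mod period f x)) x = (f ^^ n) x"
proof -
  let ?p = "period f x"
  have periodic: "(f ^^ (?p * q)) x = x" for q
  proof (induction q)
    case (Suc q)
    thus ?case by (simp only: mult_Suc_right funpow_add comp_apply) (simp add: funpow_period[OF assms])
  qed simp
  have "(f ^^ n) x = (f ^^ (n mod ?p + ?p * (n div ?p))) x" by simp
  also have "\<dots> = (f ^^ (n mod ?p)) ((f ^^ (?p * (n div ?p))) x)" by (simp only: funpow_add comp_apply)
  finally show ?thesis using periodic by simp
qed

lemma funpow_inj_less_period:
  assumes "x \<in> A" "i < period f x" "j < period f x" "(f ^^ i) x = (f ^^ j) x"
  shows "i = j"
proof -
  have False if "a < b" "b < period f x" "(f ^^ a) x = (f ^^ b) x" for a b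
  proof -
    have "(f ^^ (b - a)) x = x" using funpow_eq_imp_funpow_diff[OF assms(1)] that by simp
    thus False using funpow_neq_less_period[of "b - a" x] that by simp
  qed
  thus ?thesis using assms(2-4) by (metis linorder_neqE_nat)
qed

lemma orb_eq_image_period:
  assumes "x \<in> A" shows "orb f x = (\<lambda>i. (f ^^ i) x) ` {..<period f x}"
proof -
  have "(f ^^ n) x \<in> (\<lambda>i. (f ^^ i) x) ` {..<period f x}" for n
    using funpow_mod_period[OF assms, of n] period_pos[OF assms] by (auto intro!: image_eqI[of _ _ "n mod period f x"])
  thus ?thesis unfolding orb_def by auto
qed

lemma card_orb:
  assumes "x \<in> A" shows "card (orb f x) = period f x"
proof -
  have "inj_on (\<lambda>i. (f ^^ i) x) {..<period f x}"
    using funpow_inj_less_period[OF assms] by (auto simp: inj_on_def)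
  thus ?thesis using orb_eq_image_period[OF assms] card_image by fastforce
qed

lemma orb_subset: "x \<in> A \<Longrightarrow> orb f x \<subseteq> A"
  unfolding orb_def using funpow_in_A by auto

lemma orb_self: "x \<in> orb f x"
  unfolding orb_def by (auto intro: exI[of _ 0])

lemma funpow_in_orb: "(f ^^ n) x \<in> orb f x"
  unfolding orb_def by auto

lemma orb_funpow:
  assumes "x \<in> A" shows "orb f ((f ^^ m) x) = orb f x"
proof
  show "orb f ((f ^^ m) x) \<subseteq> orb f x"
  proof
    fix y assume "y \<in> orb f ((f ^^ m) x)"
    then obtain n where "y = (f ^^ (n + m)) x" unfolding orb_def by (auto simp: funpow_add)
    thus "y \<in> orb f x" by (simp add: funpow_in_orb)
  qed
  show "orb f x \<subseteq> orb f ((f ^^ m) x)"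
  proof
    fix y assume "y \<in> orb f x"
    then obtain n where y: "y = (f ^^ n) x" unfolding orb_def by auto
    let ?p = "period f x"
    have "n + (?p - 1) * m + m = n + ?p * m" using period_pos[OF assms] by (cases ?p) auto
    moreover have "(f ^^ (n + (?p - 1) * m)) ((f ^^ m) x) = (f ^^ (n + (?p - 1) * m + m)) x"
      by (simp only: funpow_add comp_apply)
    ultimately have "(f ^^ (n + (?p - 1) * m)) ((f ^^ m) x) = (f ^^ (n + ?p * m)) x" by metis
    also have "\<dots> = y"
      using y funpow_mod_period[OF assms, of "n + ?p * m"] funpow_mod_period[OF assms, of n] by simp
    finally show "y \<in> orb f ((f ^^ m) x)" by (metis funpow_in_orb)
  qed
qed

lemma orb_step: "x \<in> A \<Longrightarrow> orb f (f x) = orb f x"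
  using orb_funpow[of x 1] by simp

lemma orb_eq_if_mem:
  assumes "x \<in> A" "y \<in> orb f x" shows "orb f y = orb f x"
proof -
  obtain n where "y = (f ^^ n) x" using assms(2) unfolding orb_def by auto
  thus ?thesis using orb_funpow[OF assms(1)] by simp
qed

end

section \<open>Parity and symmetric differences\<close>

lemma odd_card_sym_diff:
  assumes "finite A" "finite B"
  shows "odd (card (sym_diff A B)) \<longleftrightarrow> odd (card A) \<noteq> odd (card B)"
proof -
  have "card (sym_diff A B) = card (A - B) + card (B - A)"
    using assms by (subst card_Un_disjoint) auto
  moreover have "card (A - B) = card A - card (A \<inter> B)" "card (B - A) = card B - card (A \<inter> B)"
    using assms by (simp_all add: card_Diff_subset_Int Int_commute)
  moreover have "card (A \<inter> B) \<le> card A" "card (A \<inter> B) \<le> card B"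
    using assms by (auto intro: card_mono)
  ultimately show ?thesis by auto
qed

lemma card_eq_card_kernel_mult_card_image:
  assumes "finite A"
    and closed: "\<And>X Y. X \<in> A \<Longrightarrow> Y \<in> A \<Longrightarrow> sym_diff X Y \<in> A"
    and hom: "\<And>X Y. X \<in> A \<Longrightarrow> Y \<in> A \<Longrightarrow> f (sym_diff X Y) = sym_diff (f X) (f Y)"
  shows "card A = card {X\<in>A. f X = {}} * card (f ` A)"
proof -
  let ?K = "{X\<in>A. f X = {}}" and ?fibre = "\<lambda>b. {X\<in>A. f X = b}"
  have card_fibre: "card (?fibre b) = card ?K" if b: "b \<in> f ` A" for b
  proof -
    obtain X0 where X0: "X0 \<in> A" "f X0 = b" using b by auto
    have "?fibre b = sym_diff X0 ` ?K"
    proof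
      show "?fibre b \<subseteq> sym_diff X0 ` ?K"
      proof
        fix X assume X: "X \<in> ?fibre b"
        have "sym_diff X0 X \<in> ?K" using X X0 closed hom by auto
        moreover have "X = sym_diff X0 (sym_diff X0 X)" by auto
        ultimately show "X \<in> sym_diff X0 ` ?K" by blast
      qed
      show "sym_diff X0 ` ?K \<subseteq> ?fibre b" using X0 closed hom by auto
    qed
    moreover have "inj_on (sym_diff X0) ?K" by (rule inj_onI) blast
    ultimately show ?thesis by (simp add: card_image)
  qed
  have "card A = card (\<Union>b\<in>f ` A. ?fibre b)" by (rule arg_cong[where f = card]) auto
  also have "\<dots> = (\<Sum>b\<in>f ` A. card (?fibre b))"
    using assms(1) by (intro card_UN_disjoint) auto
  also have "\<dots> = (\<Sum>b\<in>f ` A. card ?K)" using card_fibre by simp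
  finally show ?thesis by simp
qed

lemma card_even_subsets:
  assumes "finite W" "W \<noteq> {}"
  shows "2 * card {B. B \<subseteq> W \<and> even (card B)} = 2 ^ card W"
proof -
  let ?E = "{B. B \<subseteq> W \<and> even (card B)}" and ?O = "{B. B \<subseteq> W \<and> odd (card B)}"
  have "card ?E = card ?O"
    using card_subsupersets_even_odd[of W "{}"] assms by auto
  moreover have "card (Pow W) = card ?E + card ?O"
    using assms(1) by (subst card_Un_disjoint[symmetric]) (auto intro: arg_cong[where f = card])
  ultimately show ?thesis using assms(1) by (simp add: card_Pow)
qed

lemma even_card_if_involution:
  assumes "finite A" "\<And>x. x \<in> A \<Longrightarrow> g x \<in> A \<and> g x \<noteq> x \<and> g (g x) = x"
  shows "even (card A)"
  using assms
proof (induction "card A" arbitrary: A rule: less_induct)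
  case less
  show ?case
  proof (cases "A = {}")
    case False
    then obtain x where x: "x \<in> A" by auto
    let ?A' = "A - {x, g x}"
    have "g x \<in> A" "g x \<noteq> x" using less.prems(2)[OF x] by auto
    hence card_A: "card A = card ?A' + 2"
      using x less.prems(1) card_Diff_subset[of "{x, g x}" A] card_mono[of A "{x, g x}"] by auto
    have "g y \<in> ?A' \<and> g y \<noteq> y \<and> g (g y) = y" if "y \<in> ?A'" for y
      using that less.prems(2)[of y] less.prems(2)[OF x] by auto
    hence "even (card ?A')" using card_A less.prems(1) by (intro less.hyps) auto
    thus ?thesis using card_A by simp
  qed simp
qed

lemma even_card_cyclic_changes:
  fixes pa pb pc pe :: bool
  assumes "distinct [a, b, c, e]"
    and "P a = (pa \<noteq> pb)" "P b = (pb \<noteq> pc)" "P c = (pc \<noteq> pe)" "P e = (pe \<noteq> pa)"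
  shows "even (card {y \<in> {a, b, c, e}. P y})"
proof -
  let ?f = "\<lambda>y. (if P y then 1 else 0) :: nat"
  have "even (sum ?f {a, b, c, e}) \<longleftrightarrow> even (card {y \<in> {a, b, c, e}. odd (?f y)})"
    by (rule even_sum_iff) simp
  moreover have "{y \<in> {a, b, c, e}. odd (?f y)} = {y \<in> {a, b, c, e}. P y}" by auto
  moreover have "sum ?f {a, b, c, e} = ?f a + ?f b + ?f c + ?f e"
    using assms(1) by simp
  moreover have "even (?f a + ?f b + ?f c + ?f e)"
    using assms(2-5) by (cases pa; cases pb; cases pc; cases pe) simp_all
  ultimately show ?thesis by simp
qed

locale knot_map =
  fixes H :: "'d set" and \<sigma> \<alpha> :: "'d \<Rightarrow> 'd"
  assumes knot_diagram: "knot_diagram H \<sigma> \<alpha>"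
begin

lemma finite_H: "finite H" and H_nonempty: "H \<noteq> {}" and bij_\<sigma>: "bij_betw \<sigma> H H"
  and card_orb_\<sigma>: "\<And>d. d \<in> H \<Longrightarrow> card (orb \<sigma> d) = 4"
  and \<alpha>_in: "\<And>d. d \<in> H \<Longrightarrow> \<alpha> d \<in> H"
  and \<alpha>_neq: "\<And>d. d \<in> H \<Longrightarrow> \<alpha> d \<noteq> d"
  and \<alpha>_\<alpha>: "\<And>d. d \<in> H \<Longrightarrow> \<alpha> (\<alpha> d) = d"
  and euler: "int (card (dvertices H \<sigma>)) - int (card (dedges H \<alpha>)) + int (card (dregions H \<sigma> \<alpha>)) = 2"
  and connected: "\<And>d e. d \<in> H \<Longrightarrow> e \<in> H \<Longrightarrow> (straight_step \<sigma> \<alpha>)\<^sup>*\<^sup>* d e"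
  using knot_diagram unfolding knot_diagram_def by auto

lemma \<sigma>_in: "d \<in> H \<Longrightarrow> \<sigma> d \<in> H"
  using bij_\<sigma> bij_betwE by blast

sublocale vertex: perm_on H \<sigma>
  using finite_H bij_\<sigma> \<sigma>_in by unfold_locales (auto simp: bij_betw_def)

sublocale region: perm_on H "\<sigma> \<circ> \<alpha>"
proof
  show "inj_on (\<sigma> \<circ> \<alpha>) H"
    using bij_\<sigma> \<alpha>_in \<alpha>_\<alpha> unfolding bij_betw_def inj_on_def by (metis comp_apply)
qed (use finite_H \<sigma>_in \<alpha>_in in auto)

abbreviation V :: "'d \<Rightarrow> 'd set" where "V d \<equiv> orb \<sigma> d"
abbreviation F :: "'d \<Rightarrow> 'd set" where "F d \<equiv> orb (\<sigma> \<circ> \<alpha>) d"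

lemma period_\<sigma>: "d \<in> H \<Longrightarrow> period \<sigma> d = 4"
  using vertex.card_orb card_orb_\<sigma> by metis

lemma \<sigma>_\<sigma>_\<sigma>_\<sigma>: "d \<in> H \<Longrightarrow> \<sigma> (\<sigma> (\<sigma> (\<sigma> d))) = d"
  using vertex.funpow_period[of d] period_\<sigma>[of d] by (simp add: numeral_eq_Suc)

lemma V_eq: "d \<in> H \<Longrightarrow> V d = {d, \<sigma> d, \<sigma> (\<sigma> d), \<sigma> (\<sigma> (\<sigma> d))}"
  using vertex.orb_eq_image_period[of d] period_\<sigma>[of d]
  by (simp add: numeral_eq_Suc lessThan_Suc insert_commute)

lemma \<sigma>_distinct:
  assumes "d \<in> H"
  shows "d \<noteq> \<sigma> d" "d \<noteq> \<sigma> (\<sigma> d)" "d \<noteq> \<sigma> (\<sigma> (\<sigma> d))"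
    "\<sigma> d \<noteq> \<sigma> (\<sigma> d)" "\<sigma> d \<noteq> \<sigma> (\<sigma> (\<sigma> d))" "\<sigma> (\<sigma> d) \<noteq> \<sigma> (\<sigma> (\<sigma> d))"
proof -
  have "(\<sigma> ^^ i) d \<noteq> (\<sigma> ^^ j) d" if "i < 4" "j < 4" "i \<noteq> j" for i j
    using vertex.funpow_inj_less_period[OF assms, of i j] period_\<sigma>[OF assms] that by auto
  from this[of 0 1] this[of 0 2] this[of 0 3] this[of 1 2] this[of 1 3] this[of 2 3]
  show "d \<noteq> \<sigma> d" "d \<noteq> \<sigma> (\<sigma> d)" "d \<noteq> \<sigma> (\<sigma> (\<sigma> d))"
    "\<sigma> d \<noteq> \<sigma> (\<sigma> d)" "\<sigma> d \<noteq> \<sigma> (\<sigma> (\<sigma> d))" "\<sigma> (\<sigma> d) \<noteq> \<sigma> (\<sigma> (\<sigma> d))"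
    by (simp_all add: numeral_eq_Suc)
qed

lemma V_subset: "d \<in> H \<Longrightarrow> V d \<subseteq> H"
  using vertex.orb_subset .

lemma V_eq_if_mem: "d \<in> H \<Longrightarrow> x \<in> V d \<Longrightarrow> V x = V d"
  using vertex.orb_eq_if_mem .

lemma mem_V_iff: "d \<in> H \<Longrightarrow> x \<in> H \<Longrightarrow> x \<in> V d \<longleftrightarrow> V x = V d"
  using V_eq_if_mem vertex.orb_self by metis

lemma V_\<sigma>: "d \<in> H \<Longrightarrow> V (\<sigma> d) = V d"
  using vertex.orb_step .

lemma mem_F_iff: "d \<in> H \<Longrightarrow> x \<in> H \<Longrightarrow> x \<in> F d \<longleftrightarrow> F x = F d"
  using region.orb_eq_if_mem region.orb_self by metis

lemma F_\<sigma>_\<alpha>: "d \<in> H \<Longrightarrow> F (\<sigma> (\<alpha> d)) = F d"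
  using region.orb_step[of d] by simp

lemma F_\<alpha>: "d \<in> H \<Longrightarrow> F (\<alpha> d) = F (\<sigma> d)"
  using F_\<sigma>_\<alpha>[of "\<alpha> d"] \<alpha>_in \<alpha>_\<alpha> by simp

lemma dregions_eq: "dregions H \<sigma> \<alpha> = F ` H"
  unfolding dregions_def by auto

lemma dvertices_eq: "dvertices H \<sigma> = V ` H"
  unfolding dvertices_def by auto

lemma V_Int_F:
  assumes "d \<in> H" "x \<in> H"
  shows "V d \<inter> F x = {y \<in> {d, \<sigma> d, \<sigma> (\<sigma> d), \<sigma> (\<sigma> (\<sigma> d))}. F y = F x}"
  using mem_F_iff[OF assms(2)] V_subset[OF assms(1)] V_eq[OF assms(1)] by blast

lemma incident_regions:
  assumes "d \<in> H"
  shows "{r \<in> dregions H \<sigma> \<alpha>. incident (V d) r} = {F d, F (\<sigma> d), F (\<sigma> (\<sigma> d)), F (\<sigma> (\<sigma> (\<sigma> d)))}"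
proof -
  have "incident (V d) (F x) \<longleftrightarrow> F x \<in> {F d, F (\<sigma> d), F (\<sigma> (\<sigma> d)), F (\<sigma> (\<sigma> (\<sigma> d)))}"
    if "x \<in> H" for x
    unfolding incident_def V_Int_F[OF assms that] by auto
  moreover have "{d, \<sigma> d, \<sigma> (\<sigma> d), \<sigma> (\<sigma> (\<sigma> d))} \<subseteq> H" using assms \<sigma>_in by auto
  ultimately show ?thesis unfolding dregions_eq by auto
qed

section \<open>Even cycles bound regions\<close>

text \<open>Mod-2 chains: an \<open>\<alpha>\<close>-closed dart set is a set of edges, \<open>odd_vertices\<close> is its
  boundary, and \<open>region_boundary S\<close> is the set of edges separating the regions in \<open>S\<close> from
  the others.\<close>

definition alpha_closed :: "'d set \<Rightarrow> bool" where
  "alpha_closed Z \<longleftrightarrow> Z \<subseteq> H \<and> (\<forall>d\<in>Z. \<alpha> d \<in> Z)"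

definition even_cycle :: "'d set \<Rightarrow> bool" where
  "even_cycle Z \<longleftrightarrow> alpha_closed Z \<and> (\<forall>d\<in>H. even (card (Z \<inter> V d)))"

definition odd_vertices :: "'d set \<Rightarrow> 'd set set" where
  "odd_vertices Z = {v \<in> V ` H. odd (card (Z \<inter> v))}"

definition region_boundary :: "'d set set \<Rightarrow> 'd set" where
  "region_boundary S = {d \<in> H. (F d \<in> S) \<noteq> (F (\<alpha> d) \<in> S)}"

lemma alpha_closed_sym_diff:
  assumes "alpha_closed X" "alpha_closed Y" shows "alpha_closed (sym_diff X Y)"
proof -
  have "\<alpha> d \<in> Z \<longleftrightarrow> d \<in> Z" if "alpha_closed Z" "d \<in> H" for Z d
    using that \<alpha>_\<alpha>[of d] unfolding alpha_closed_def by metis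
  thus ?thesis using assms unfolding alpha_closed_def by blast
qed

lemma alpha_closed_edge: "d \<in> H \<Longrightarrow> alpha_closed {d, \<alpha> d}"
  unfolding alpha_closed_def using \<alpha>_in \<alpha>_\<alpha> by auto

lemma finite_alpha_closed: "finite {Z. alpha_closed Z}"
  using finite_H by (rule finite_subset[rotated, OF finite_Pow_iff[THEN iffD2]]) (auto simp: alpha_closed_def)

lemma card_alpha_closed: "card {Z. alpha_closed Z} = 2 ^ card (dedges H \<alpha>)"
proof -
  let ?E = "dedges H \<alpha>" and ?g = "\<lambda>Z. {e \<in> dedges H \<alpha>. e \<subseteq> Z}"
  have "bij_betw ?g {Z. alpha_closed Z} (Pow ?E)"
  proof (rule bij_betw_byWitness[where f' = Union])
    show "\<forall>Z\<in>{Z. alpha_closed Z}. \<Union>(?g Z) = Z"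
    proof
      fix Z assume Z: "Z \<in> {Z. alpha_closed Z}"
      have "{d, \<alpha> d} \<in> ?g Z" if "d \<in> Z" for d
        using Z that unfolding alpha_closed_def dedges_def by auto
      thus "\<Union>(?g Z) = Z" by blast
    qed
    show "\<forall>E\<in>Pow ?E. ?g (\<Union>E) = E"
    proof
      fix E assume E: "E \<in> Pow ?E"
      have "e \<in> E" if e: "e \<in> ?g (\<Union>E)" for e
      proof -
        obtain d where d: "d \<in> H" "e = {d, \<alpha> d}" using e unfolding dedges_def by auto
        then obtain e' where e': "e' \<in> E" "d \<in> e'" using e by auto
        then obtain d' where "d' \<in> H" "e' = {d', \<alpha> d'}" using E unfolding dedges_def by auto
        hence "e' = e" using d e' \<alpha>_\<alpha> by auto
        thus ?thesis using e' by simp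
      qed
      thus "?g (\<Union>E) = E" using E by auto
    qed
    show "?g ` {Z. alpha_closed Z} \<subseteq> Pow ?E" by auto
    have "X \<subseteq> H \<and> (\<forall>d\<in>X. \<alpha> d \<in> X)" if "X \<in> ?E" for X
      using that \<alpha>_in \<alpha>_\<alpha> unfolding dedges_def by auto
    thus "Union ` Pow ?E \<subseteq> {Z. alpha_closed Z}"
      unfolding alpha_closed_def by blast
  qed
  hence "card {Z. alpha_closed Z} = card (Pow ?E)" by (rule bij_betw_same_card)
  thus ?thesis using finite_H by (simp add: card_Pow dedges_def)
qed

lemma odd_vertices_sym_diff:
  assumes "alpha_closed X" "alpha_closed Y"
  shows "odd_vertices (sym_diff X Y) = sym_diff (odd_vertices X) (odd_vertices Y)"
proof -
  have "finite (X \<inter> w)" "finite (Y \<inter> w)" for w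
    using assms finite_H unfolding alpha_closed_def by (meson finite_Int finite_subset)+
  hence "odd (card (sym_diff X Y \<inter> w)) \<longleftrightarrow> odd (card (X \<inter> w)) \<noteq> odd (card (Y \<inter> w))" for w
    using odd_card_sym_diff[of "X \<inter> w" "Y \<inter> w"] by (simp add: Int_Un_distrib2 Diff_Int_distrib2)
  thus ?thesis unfolding odd_vertices_def by auto
qed

lemma odd_vertices_edge:
  assumes "d \<in> H" shows "odd_vertices {d, \<alpha> d} = sym_diff {V d} {V (\<alpha> d)}"
proof -
  have "odd (card ({d, \<alpha> d} \<inter> V x)) \<longleftrightarrow> (V x = V d) \<noteq> (V x = V (\<alpha> d))" if "x \<in> H" for x
    using mem_V_iff[OF that assms] mem_V_iff[OF that \<alpha>_in[OF assms]] \<alpha>_neq[OF assms]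
    by (cases "d \<in> V x"; cases "\<alpha> d \<in> V x") (auto simp: Int_insert_left)
  thus ?thesis using assms \<alpha>_in unfolding odd_vertices_def by auto
qed

abbreviation boundaries :: "'d set set set" where
  "boundaries \<equiv> odd_vertices ` {Z. alpha_closed Z}"

lemma empty_in_boundaries: "{} \<in> boundaries"
proof -
  have "alpha_closed {}" "odd_vertices {} = {}" unfolding alpha_closed_def odd_vertices_def by auto
  thus ?thesis by force
qed

lemma sym_diff_in_boundaries:
  assumes "B1 \<in> boundaries" "B2 \<in> boundaries" shows "sym_diff B1 B2 \<in> boundaries"
proof -
  obtain Z1 Z2 where "alpha_closed Z1" "alpha_closed Z2" "B1 = odd_vertices Z1" "B2 = odd_vertices Z2"
    using assms by auto
  thus ?thesis using odd_vertices_sym_diff alpha_closed_sym_diff by (metis image_eqI mem_Collect_eq)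
qed

lemma straight_steps_in: "d \<in> H \<Longrightarrow> (straight_step \<sigma> \<alpha>)\<^sup>*\<^sup>* d e \<Longrightarrow> e \<in> H"
  by (erule rtranclp_induct) (auto simp: straight_step_def \<sigma>_in \<alpha>_in)

lemma vertex_pair_in_boundaries:
  assumes "d \<in> H" "e \<in> H" shows "sym_diff {V d} {V e} \<in> boundaries"
  using connected[OF assms]
proof (induction rule: rtranclp_induct)
  case base
  thus ?case using empty_in_boundaries by simp
next
  case (step y z)
  have y: "y \<in> H" using straight_steps_in[OF assms(1) step.hyps(1)] .
  from step.hyps(2) consider "z = \<sigma> (\<sigma> y)" | "z = \<alpha> y" unfolding straight_step_def by auto
  thus ?case
  proof cases
    case 1
    thus ?thesis using step.IH y \<sigma>_in V_\<sigma> by simp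
  next
    case 2
    have "odd_vertices {y, \<alpha> y} \<in> boundaries" using alpha_closed_edge[OF y] by blast
    hence "sym_diff {V y} {V z} \<in> boundaries" using odd_vertices_edge[OF y] 2 by simp
    moreover have "sym_diff (sym_diff {V d} {V y}) (sym_diff {V y} {V z}) = sym_diff {V d} {V z}"
      by auto
    ultimately show ?thesis using sym_diff_in_boundaries[OF step.IH] by metis
  qed
qed

lemma even_subset_in_boundaries:
  "B \<subseteq> V ` H \<Longrightarrow> even (card B) \<Longrightarrow> B \<in> boundaries"
proof (induction "card B" arbitrary: B rule: less_induct)
  case less
  show ?case
  proof (cases "B = {}")
    case False
    have "finite B" using less.prems(1) finite_H by (meson finite_imageI finite_subset)
    obtain v1 where v1: "v1 \<in> B" using False by auto
    have "B \<noteq> {v1}" using less.prems(2) by auto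
    then obtain v2 where v: "v1 \<in> B" "v2 \<in> B" "v1 \<noteq> v2" using v1 by auto
    let ?B' = "B - {v1, v2}"
    have "card ?B' < card B"
      using v \<open>finite B\<close> by (intro psubset_card_mono) auto
    hence "?B' \<in> boundaries"
      using less.prems v \<open>finite B\<close> by (intro less.hyps) (auto simp: card_Diff_subset)
    moreover obtain d1 d2 where "d1 \<in> H" "d2 \<in> H" "v1 = V d1" "v2 = V d2"
      using v less.prems(1) by blast
    hence "sym_diff {v1} {v2} \<in> boundaries" using vertex_pair_in_boundaries by simp
    moreover have "sym_diff (sym_diff {v1} {v2}) ?B' = B" using v by auto
    ultimately show ?thesis using sym_diff_in_boundaries by metis
  qed (simp add: empty_in_boundaries)
qed

lemma card_even_cycles_le:
  "card {Z. even_cycle Z} * 2 ^ card (V ` H) \<le> 2 * 2 ^ card (dedges H \<alpha>)"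
proof -
  have kernel: "{Z \<in> {Z. alpha_closed Z}. odd_vertices Z = {}} = {Z. even_cycle Z}"
    unfolding odd_vertices_def even_cycle_def by auto
  have card_closed: "card {Z. alpha_closed Z} = card {Z. even_cycle Z} * card boundaries"
    unfolding kernel[symmetric]
    by (rule card_eq_card_kernel_mult_card_image)
      (simp_all add: finite_alpha_closed alpha_closed_sym_diff odd_vertices_sym_diff)
  have "card {B. B \<subseteq> V ` H \<and> even (card B)} \<le> card boundaries"
    using even_subset_in_boundaries finite_alpha_closed by (intro card_mono) auto
  hence "2 ^ card (V ` H) \<le> 2 * card boundaries"
    using card_even_subsets[of "V ` H"] finite_H H_nonempty by simp
  hence "card {Z. even_cycle Z} * 2 ^ card (V ` H) \<le> card {Z. even_cycle Z} * (2 * card boundaries)"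
    by simp
  also have "\<dots> = 2 * 2 ^ card (dedges H \<alpha>)" using card_closed card_alpha_closed by simp
  finally show ?thesis .
qed

lemma mem_region_boundary:
  "d \<in> H \<Longrightarrow> d \<in> region_boundary S \<longleftrightarrow> (F d \<in> S) \<noteq> (F (\<sigma> d) \<in> S)"
  unfolding region_boundary_def using F_\<alpha> by simp

lemma even_cycle_region_boundary: "even_cycle (region_boundary S)"
  unfolding even_cycle_def
proof (intro conjI ballI)
  show "alpha_closed (region_boundary S)"
    unfolding alpha_closed_def region_boundary_def using \<alpha>_in \<alpha>_\<alpha> by auto
  fix d assume d: "d \<in> H"
  have "region_boundary S \<inter> V d
      = {y \<in> {d, \<sigma> d, \<sigma> (\<sigma> d), \<sigma> (\<sigma> (\<sigma> d))}. (F y \<in> S) \<noteq> (F (\<sigma> y) \<in> S)}"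
    unfolding V_eq[OF d] using mem_region_boundary d \<sigma>_in by auto
  moreover have "distinct [d, \<sigma> d, \<sigma> (\<sigma> d), \<sigma> (\<sigma> (\<sigma> d))]"
    using \<sigma>_distinct[OF d] by auto
  ultimately show "even (card (region_boundary S \<inter> V d))"
    using even_card_cyclic_changes[where P = "\<lambda>y. (F y \<in> S) \<noteq> (F (\<sigma> y) \<in> S)"]
    by (simp add: \<sigma>_\<sigma>_\<sigma>_\<sigma>[OF d])
qed

lemma region_boundary_eq_empty:
  assumes S: "S \<subseteq> F ` H" and empty: "region_boundary S = {}"
  shows "S = {} \<or> S = F ` H"
proof (cases "S = {}")
  case False
  then obtain x where x: "x \<in> H" "F x \<in> S" using S by auto
  have \<sigma>_S: "F (\<sigma> d) \<in> S \<longleftrightarrow> F d \<in> S" if "d \<in> H" for d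
    using mem_region_boundary[OF that, of S] empty by auto
  have "F y \<in> S" if "(straight_step \<sigma> \<alpha>)\<^sup>*\<^sup>* x y" for y
    using that
  proof (induction rule: rtranclp_induct)
    case (step y z)
    have y: "y \<in> H" using straight_steps_in[OF x(1) step.hyps(1)] .
    from step.hyps(2) consider "z = \<sigma> (\<sigma> y)" | "z = \<alpha> y" unfolding straight_step_def by blast
    thus ?case
      using step.IH \<sigma>_S[OF y] \<sigma>_S[OF \<sigma>_in[OF y]] F_\<alpha>[OF y] by cases metis+
  qed (use x in blast)
  thus ?thesis using connected[OF x(1)] S by auto
qed simp

lemma card_region_sets: "card (Pow (F ` H)) = 2 * card (region_boundary ` Pow (F ` H))"
proof -
  have "card (Pow (F ` H))
      = card {S \<in> Pow (F ` H). region_boundary S = {}} * card (region_boundary ` Pow (F ` H))"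
    by (rule card_eq_card_kernel_mult_card_image) (auto simp: finite_H region_boundary_def)
  moreover have "{S \<in> Pow (F ` H). region_boundary S = {}} = {{}, F ` H}"
  proof
    show "{S \<in> Pow (F ` H). region_boundary S = {}} \<subseteq> {{}, F ` H}"
      using region_boundary_eq_empty by auto
    show "{{}, F ` H} \<subseteq> {S \<in> Pow (F ` H). region_boundary S = {}}"
      unfolding region_boundary_def using \<alpha>_in by auto
  qed
  moreover have "F ` H \<noteq> {}" using H_nonempty by auto
  ultimately show ?thesis by simp
qed

text \<open>The Jordan curve theorem for the diagram: by Euler's formula there are at least as many
  region boundaries as even cycles.\<close>

lemma even_cycle_eq_region_boundary:
  assumes "even_cycle Z" obtains S where "Z = region_boundary S"
proof -
  let ?K = "{Z. even_cycle Z}" and ?I = "region_boundary ` Pow (F ` H)"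
  have "?I \<subseteq> ?K" using even_cycle_region_boundary by auto
  moreover have "finite ?K"
    using finite_alpha_closed by (rule finite_subset[rotated]) (auto simp: even_cycle_def)
  moreover have "card ?K \<le> card ?I"
  proof -
    have "card (V ` H) + card (F ` H) = card (dedges H \<alpha>) + 2"
      using euler unfolding dvertices_eq dregions_eq by linarith
    hence euler_pow: "2 ^ card (V ` H) * 2 ^ card (F ` H) = 2 * 2 ^ card (dedges H \<alpha>) * (2::nat)"
      by (simp add: power_add[symmetric])
    have "card ?K * (2 ^ card (V ` H) * 2 ^ card (F ` H))
        \<le> 2 * 2 ^ card (dedges H \<alpha>) * 2 ^ card (F ` H)"
      using card_even_cycles_le by (simp add: mult.assoc[symmetric])
    also have "\<dots> = card ?I * (2 ^ card (V ` H) * 2 ^ card (F ` H))"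
      using card_region_sets finite_H euler_pow by (simp add: card_Pow)
    finally show ?thesis by simp
  qed
  ultimately have "?I = ?K" by (intro card_seteq) auto
  thus ?thesis using assms that by blast
qed

lemma even_cycle_mem_\<sigma>_iff:
  assumes "even_cycle Z" "d \<in> H" "F (\<sigma> (\<sigma> d)) = F d"
  shows "\<sigma> d \<in> Z \<longleftrightarrow> d \<in> Z"
proof -
  obtain S where "Z = region_boundary S" using even_cycle_eq_region_boundary[OF assms(1)] .
  thus ?thesis using mem_region_boundary assms(2,3) \<sigma>_in by auto
qed

text \<open>No edge has the same region on both sides: \<open>H\<close> itself is an even cycle, hence a region
  boundary.\<close>

lemma F_\<sigma>_neq: assumes "d \<in> H" shows "F (\<sigma> d) \<noteq> F d"
proof -
  have "even_cycle H"
    unfolding even_cycle_def alpha_closed_def using \<alpha>_in V_subset card_orb_\<sigma>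
    by (simp add: Int_absorb1)
  then obtain S where "H = region_boundary S" by (rule even_cycle_eq_region_boundary)
  thus ?thesis using mem_region_boundary[OF assms, of S] assms by auto
qed

lemma F_\<sigma>_neq_around:
  assumes d: "d \<in> H"
  shows "F (\<sigma> d) \<noteq> F d" "F (\<sigma> (\<sigma> d)) \<noteq> F (\<sigma> d)" "F (\<sigma> (\<sigma> (\<sigma> d))) \<noteq> F (\<sigma> (\<sigma> d))"
    "F d \<noteq> F (\<sigma> (\<sigma> (\<sigma> d)))"
  using F_\<sigma>_neq[of d] F_\<sigma>_neq[of "\<sigma> d"] F_\<sigma>_neq[of "\<sigma> (\<sigma> d)"] F_\<sigma>_neq[of "\<sigma> (\<sigma> (\<sigma> d))"]
    d \<sigma>_in \<sigma>_\<sigma>_\<sigma>_\<sigma>[OF d] by auto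

section \<open>Transitions, walks and arcs\<close>

text \<open>A transition pairs up the four corners of every crossing; walking along edges and turning
  according to a transition traces the circles of the corresponding state of the diagram.\<close>

definition transition :: "('d \<Rightarrow> 'd) \<Rightarrow> bool" where
  "transition p \<longleftrightarrow> (\<forall>d\<in>H. p d \<in> V d \<and> p d \<noteq> d \<and> p (p d) = d)"

definition walk_step :: "('d \<Rightarrow> 'd) \<Rightarrow> 'd \<Rightarrow> 'd \<Rightarrow> bool" where
  "walk_step p x y \<longleftrightarrow> y = \<alpha> x \<or> y = p x"

abbreviation walk :: "('d \<Rightarrow> 'd) \<Rightarrow> 'd \<Rightarrow> 'd \<Rightarrow> bool" where
  "walk p \<equiv> (walk_step p)\<^sup>*\<^sup>*"

lemma transitionD:
  "transition p \<Longrightarrow> d \<in> H \<Longrightarrow> p d \<in> V d \<and> p d \<noteq> d \<and> p (p d) = d"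
  unfolding transition_def by blast

lemma transition_in: "transition p \<Longrightarrow> d \<in> H \<Longrightarrow> p d \<in> H"
  using transitionD V_subset by blast

lemma transition_not_mem_V:
  assumes "transition p" "d \<in> H" "w \<in> H" "d \<notin> V w" shows "p d \<notin> V w"
  using transitionD[OF assms(1,2)] V_eq_if_mem assms(2-4) vertex.orb_self by metis

lemma walk_in: "transition p \<Longrightarrow> x \<in> H \<Longrightarrow> walk p x y \<Longrightarrow> y \<in> H"
  by (erule rtranclp_induct[of _ x y]) (auto simp: walk_step_def \<alpha>_in transition_in)

lemma walk_sym:
  assumes p: "transition p" and x: "x \<in> H" and "walk p x y" shows "walk p y x"
  using assms(3)
proof (induction rule: rtranclp_induct)
  case (step y z)
  have "y \<in> H" using walk_in[OF p x step.hyps(1)] .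
  hence "walk_step p z y" using step.hyps(2) \<alpha>_\<alpha> transitionD[OF p] unfolding walk_step_def by auto
  thus ?case using step.IH by (meson converse_rtranclp_into_rtranclp)
qed simp

lemma walk_closed:
  assumes "walk p x y" "x \<in> Z" "\<And>z. z \<in> Z \<Longrightarrow> \<alpha> z \<in> Z \<and> p z \<in> Z"
  shows "y \<in> Z"
  using assms(1,2) by (induction rule: rtranclp_induct) (auto simp: walk_step_def dest: assms(3))

lemma walk_if_agree:
  assumes "transition p" "x \<in> H" "walk p x y" "\<And>d. d \<in> H \<Longrightarrow> d \<notin> U \<Longrightarrow> q d = p d"
  shows "walk q x y \<or> (\<exists>u\<in>U. walk q x u)"
  using assms(3)
proof (induction rule: rtranclp_induct)
  case (step y z)
  have "y \<in> H" using walk_in[OF assms(1,2) step.hyps(1)] .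
  hence "y \<notin> U \<Longrightarrow> walk_step q y z" using step.hyps(2) assms(4) unfolding walk_step_def by auto
  thus ?case using step.IH by (meson rtranclp.rtrancl_into_rtrancl)
qed simp

end

text \<open>Opening the crossing \<open>w\<close> (its corners become fixed points of \<open>cut\<close>) turns the state circle
  through a corner \<open>y\<close> of \<open>w\<close> into an arc ending at another corner of \<open>w\<close>; the orbit of
  \<open>arc_step\<close> through \<open>y\<close> runs along this arc and back.\<close>

locale cut_transition = knot_map H \<sigma> \<alpha> for H :: "'d set" and \<sigma> \<alpha> +
  fixes p :: "'d \<Rightarrow> 'd" and w :: 'd
  assumes transition: "transition p" and w_in: "w \<in> H"
begin

definition cut :: "'d \<Rightarrow> 'd" where
  "cut d = (if d \<in> V w then d else p d)"

definition arc_step :: "'d \<Rightarrow> 'd" where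
  "arc_step d = cut (\<alpha> d)"

lemma cut_in: "d \<in> H \<Longrightarrow> cut d \<in> H"
  unfolding cut_def using transition_in[OF transition] by auto

lemma cut_cut: "d \<in> H \<Longrightarrow> cut (cut d) = d"
  unfolding cut_def using transitionD[OF transition] transition_not_mem_V[OF transition _ w_in]
  by auto

lemma arc_step_in: "d \<in> H \<Longrightarrow> arc_step d \<in> H"
  unfolding arc_step_def using cut_in \<alpha>_in by blast

lemma inj_arc_step: "inj_on arc_step H"
  by (rule inj_onI) (metis arc_step_def cut_cut \<alpha>_in \<alpha>_\<alpha>)

sublocale arc: perm_on H arc_step
  using finite_H inj_arc_step arc_step_in by unfold_locales auto

lemma arc_step_\<alpha>_cut: "d \<in> H \<Longrightarrow> arc_step (\<alpha> (cut d)) = d"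
  unfolding arc_step_def using \<alpha>_\<alpha> cut_in cut_cut by simp

definition arc_end :: "'d \<Rightarrow> 'd" where
  "arc_end y = (arc_step ^^ (period arc_step y div 2)) y"

context
  fixes y assumes y: "y \<in> V w"
begin

lemma y_in: "y \<in> H" using y V_subset[OF w_in] by blast

lemma cut_y: "cut y = y" unfolding cut_def using y by simp

lemma arc_step_funpow_in: "(arc_step ^^ j) y \<in> H" using arc.funpow_in_A[OF y_in] .

lemma \<alpha>_arc_step_funpow:
  "j < period arc_step y \<Longrightarrow> \<alpha> ((arc_step ^^ j) y) = (arc_step ^^ (period arc_step y - j - 1)) y"
proof (induction j)
  case 0
  let ?L = "period arc_step y"
  have "arc_step ((arc_step ^^ (?L - 1)) y) = y"
    using arc.funpow_period[OF y_in] arc.period_pos[OF y_in] by (metis Suc_diff_1 funpow_simps_right(2) o_apply funpow.simps(2))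
  hence "arc_step (\<alpha> y) = arc_step ((arc_step ^^ (?L - 1)) y)"
    using arc_step_\<alpha>_cut[OF y_in] cut_y by simp
  from inj_onD[OF inj_arc_step this \<alpha>_in[OF y_in] arc_step_funpow_in] show ?case by simp
next
  case (Suc j)
  let ?L = "period arc_step y"
  have "arc_step (\<alpha> ((arc_step ^^ Suc j) y)) = \<alpha> ((arc_step ^^ j) y)"
    using arc_step_\<alpha>_cut[of "\<alpha> ((arc_step ^^ j) y)"] \<alpha>_in arc_step_funpow_in
    by (simp add: arc_step_def cut_cut)
  also have "\<dots> = (arc_step ^^ (?L - j - 1)) y" using Suc by simp
  also have "?L - j - 1 = Suc (?L - Suc j - 1)" using Suc.prems by simp
  hence "(arc_step ^^ (?L - j - 1)) y = arc_step ((arc_step ^^ (?L - Suc j - 1)) y)"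
    by (subst \<open>?L - j - 1 = _\<close>) simp
  finally have "arc_step (\<alpha> ((arc_step ^^ Suc j) y)) = arc_step ((arc_step ^^ (?L - Suc j - 1)) y)" .
  from inj_onD[OF inj_arc_step this \<alpha>_in[OF arc_step_funpow_in] arc_step_funpow_in]
  show ?case .
qed

lemma cut_arc_step_funpow:
  assumes "0 < j" "j \<le> period arc_step y"
  shows "cut ((arc_step ^^ j) y) = (arc_step ^^ (period arc_step y - j)) y"
proof -
  obtain i where i: "j = Suc i" using assms(1) by (cases j) auto
  have "cut ((arc_step ^^ j) y) = \<alpha> ((arc_step ^^ i) y)"
    unfolding i using cut_cut \<alpha>_in arc_step_funpow_in by (simp add: arc_step_def)
  also have "\<dots> = (arc_step ^^ (period arc_step y - j)) y"
    using \<alpha>_arc_step_funpow[of i] i assms(2) by simp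
  finally show ?thesis .
qed

lemma arc_eq: "orb arc_step y = (\<lambda>i. (arc_step ^^ i) y) ` {..<period arc_step y}"
  using arc.orb_eq_image_period[OF y_in] .

lemma \<alpha>_in_arc: "x \<in> orb arc_step y \<Longrightarrow> \<alpha> x \<in> orb arc_step y"
  unfolding arc_eq using \<alpha>_arc_step_funpow by auto

lemma cut_in_arc:
  assumes "x \<in> orb arc_step y" shows "cut x \<in> orb arc_step y"
proof -
  obtain j where j: "j < period arc_step y" "x = (arc_step ^^ j) y" using assms unfolding arc_eq by auto
  show ?thesis
  proof (cases "j = 0")
    case True thus ?thesis using j cut_y arc.orb_self by simp
  next
    case False
    thus ?thesis using cut_arc_step_funpow j arc.funpow_in_orb by simp
  qed
qed

lemma even_period_arc: "even (period arc_step y)"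
proof (rule ccontr)
  assume "odd (period arc_step y)"
  then obtain m where "period arc_step y = 2 * m + 1" by (metis oddE)
  hence "\<alpha> ((arc_step ^^ m) y) = (arc_step ^^ m) y" using \<alpha>_arc_step_funpow[of m] by simp
  thus False using \<alpha>_neq arc_step_funpow_in by blast
qed

lemma arc_end_neq: "arc_end y \<noteq> y"
proof
  assume "arc_end y = y"
  hence "(arc_step ^^ (period arc_step y div 2)) y = (arc_step ^^ 0) y" by (simp add: arc_end_def)
  hence "period arc_step y div 2 = 0"
    using arc.funpow_inj_less_period[OF y_in] arc.period_pos[OF y_in] by simp
  thus False using even_period_arc arc.period_pos[OF y_in] by auto
qed

lemma arc_end_mem_V: "arc_end y \<in> V w"
proof (rule ccontr)
  assume not_V: "arc_end y \<notin> V w"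
  have "0 < period arc_step y div 2"
    using even_period_arc arc.period_pos[OF y_in] by (auto elim: evenE)
  hence "cut (arc_end y) = arc_end y"
    using cut_arc_step_funpow[of "period arc_step y div 2"] even_period_arc
    by (simp add: arc_end_def) (metis add_diff_cancel_left' div_le_dividend dvd_mult_div_cancel mult_2)
  hence "p (arc_end y) = arc_end y" using not_V unfolding cut_def by simp
  thus False using transitionD[OF transition] arc_step_funpow_in unfolding arc_end_def by blast
qed

lemma arc_Int_V: "orb arc_step y \<inter> V w = {y, arc_end y}"
proof
  show "{y, arc_end y} \<subseteq> orb arc_step y \<inter> V w"
    using y arc_end_mem_V arc.orb_self arc.funpow_in_orb unfolding arc_end_def by auto
  show "orb arc_step y \<inter> V w \<subseteq> {y, arc_end y}"
  proof
    fix x assume x: "x \<in> orb arc_step y \<inter> V w"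
    then obtain j where j: "j < period arc_step y" "x = (arc_step ^^ j) y" unfolding arc_eq by auto
    show "x \<in> {y, arc_end y}"
    proof (cases "j = 0")
      case False
      have "cut x = x" using x unfolding cut_def by simp
      hence "(arc_step ^^ (period arc_step y - j)) y = (arc_step ^^ j) y"
        using cut_arc_step_funpow[of j] False j by simp
      hence "period arc_step y - j = j"
        using arc.funpow_inj_less_period[OF y_in] j False by simp
      thus ?thesis using j unfolding arc_end_def by (metis insertCI add_self_div_2 le_add_diff_inverse2 less_imp_le_nat)
    qed (use j in simp)
  qed
qed

lemma walk_along_arc:
  assumes "\<And>d. d \<in> H \<Longrightarrow> d \<notin> V w \<Longrightarrow> q d = p d"
  shows "walk q y ((arc_step ^^ i) y)"
proof (induction i)
  case (Suc i)
  let ?z = "(arc_step ^^ i) y"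
  have "walk q y (\<alpha> ?z)" using Suc.IH by (rule rtranclp.rtrancl_into_rtrancl) (simp add: walk_step_def)
  moreover have "arc_step ?z = \<alpha> ?z \<or> walk_step q (\<alpha> ?z) (arc_step ?z)"
    using assms[OF \<alpha>_in[OF arc_step_funpow_in]] unfolding arc_step_def cut_def walk_step_def
    by auto
  ultimately show ?case by (auto intro: rtranclp.rtrancl_into_rtrancl)
qed simp

lemma even_cycle_arc: "even_cycle (orb arc_step y)"
  unfolding even_cycle_def alpha_closed_def
proof (intro conjI ballI)
  show "orb arc_step y \<subseteq> H" using arc.orb_subset y_in by blast
  show "\<alpha> d \<in> orb arc_step y" if "d \<in> orb arc_step y" for d using \<alpha>_in_arc[OF that] .
  fix x assume x: "x \<in> H"
  show "even (card (orb arc_step y \<inter> V x))"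
  proof (cases "V x = V w")
    case True
    thus ?thesis using arc_Int_V arc_end_neq by simp
  next
    case False
    show ?thesis
    proof (rule even_card_if_involution[where g = p])
      show "finite (orb arc_step y \<inter> V x)" using finite_H V_subset[OF x] by (meson finite_Int finite_subset)
      fix z assume z: "z \<in> orb arc_step y \<inter> V x"
      have "z \<in> H" using z V_subset[OF x] by blast
      have "V z = V x" using V_eq_if_mem[OF x] z by blast
      hence "z \<notin> V w" using False mem_V_iff[OF w_in \<open>z \<in> H\<close>] by auto
      hence "p z \<in> orb arc_step y" using cut_in_arc z unfolding cut_def by force
      thus "p z \<in> orb arc_step y \<inter> V x \<and> p z \<noteq> z \<and> p (p z) = z"
        using transitionD[OF transition \<open>z \<in> H\<close>] \<open>V z = V x\<close> by auto
    qed
  qed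
qed

end

lemma arc_end_eq_\<sigma>_\<sigma>:
  assumes straight: "\<And>d. d \<in> V w \<Longrightarrow> p d = \<sigma> (\<sigma> d)" and apart: "\<not> walk p w (\<sigma> w)"
  shows "arc_end w = \<sigma> (\<sigma> w)"
proof -
  have w_V: "w \<in> V w" by (rule vertex.orb_self)
  have walk_end: "walk p w (arc_end w)"
    using walk_along_arc[OF w_V] unfolding arc_end_def by blast
  hence "arc_end w \<noteq> \<sigma> w" using apart by auto
  moreover have "arc_end w \<noteq> \<sigma> (\<sigma> (\<sigma> w))"
  proof
    assume "arc_end w = \<sigma> (\<sigma> (\<sigma> w))"
    moreover have "walk_step p (\<sigma> (\<sigma> (\<sigma> w))) (\<sigma> w)"
      using straight[of "\<sigma> (\<sigma> (\<sigma> w))"] V_eq[OF w_in] \<sigma>_\<sigma>_\<sigma>_\<sigma>[OF \<sigma>_in[OF w_in]]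
      unfolding walk_step_def by simp
    ultimately show False using walk_end apart by (metis rtranclp.rtrancl_into_rtrancl)
  qed
  ultimately show ?thesis using arc_end_mem_V[OF w_V] arc_end_neq[OF w_V] V_eq[OF w_in] by auto
qed

end

section \<open>Smoothing the reducible crossings\<close>

context knot_map
begin

definition irreducible_at :: "'d \<Rightarrow> bool" where
  "irreducible_at d \<longleftrightarrow> F (\<sigma> (\<sigma> d)) \<noteq> F d \<and> F (\<sigma> (\<sigma> (\<sigma> d))) \<noteq> F (\<sigma> d)"

lemma irreducible_at_if_mem_V: "d \<in> H \<Longrightarrow> x \<in> V d \<Longrightarrow> irreducible_at x \<longleftrightarrow> irreducible_at d"
  unfolding irreducible_at_def using V_eq \<sigma>_\<sigma>_\<sigma>_\<sigma> \<sigma>_in by auto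

lemma irreducible_vertex_iff:
  assumes d: "d \<in> H"
  shows "irreducible_vertex H \<sigma> \<alpha> (V d) \<longleftrightarrow> irreducible_at d"
proof -
  have "irreducible_vertex H \<sigma> \<alpha> (V d)
      \<longleftrightarrow> card {F d, F (\<sigma> d), F (\<sigma> (\<sigma> d)), F (\<sigma> (\<sigma> (\<sigma> d)))} = 4"
    unfolding irreducible_vertex_def incident_regions[OF d] ..
  also have "\<dots> \<longleftrightarrow> irreducible_at d"
    using F_\<sigma>_neq_around[OF d] unfolding irreducible_at_def
    by (auto simp: card_insert_if insert_commute)
  finally show ?thesis .
qed

lemma transition_straight: "transition (\<lambda>x. \<sigma> (\<sigma> x))"
  unfolding transition_def using V_eq \<sigma>_distinct(2) \<sigma>_\<sigma>_\<sigma>_\<sigma> by (metis insertCI)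

text \<open>A crossing is reducible in at most one way: otherwise the arc of the straight transition
  opened at \<open>d\<close> would, by \<open>even_cycle_mem_\<sigma>_iff\<close>, contain three corners of \<open>d\<close>.\<close>

lemma F_\<sigma>_\<sigma>_\<sigma>_neq_if_F_\<sigma>_\<sigma>_eq:
  assumes d: "d \<in> H" and eq: "F (\<sigma> (\<sigma> d)) = F d" shows "F (\<sigma> (\<sigma> (\<sigma> d))) \<noteq> F (\<sigma> d)"
proof
  assume eq': "F (\<sigma> (\<sigma> (\<sigma> d))) = F (\<sigma> d)"
  interpret straight: cut_transition H \<sigma> \<alpha> "\<lambda>x. \<sigma> (\<sigma> x)" d
    using transition_straight d by unfold_locales
  let ?X = "orb straight.arc_step d"
  have "d \<in> ?X" by (rule straight.arc.orb_self)
  hence "\<sigma> d \<in> ?X" "\<sigma> (\<sigma> d) \<in> ?X"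
    using even_cycle_mem_\<sigma>_iff[OF straight.even_cycle_arc[OF vertex.orb_self]] eq eq' d \<sigma>_in
    by (metis \<sigma>_\<sigma>_\<sigma>_\<sigma>)+
  moreover have "\<sigma> d \<in> V d" "\<sigma> (\<sigma> d) \<in> V d" using V_eq[OF d] by auto
  ultimately show False
    using straight.arc_Int_V[OF vertex.orb_self] \<sigma>_distinct[OF d] by (metis IntI empty_iff insert_iff)
qed

text \<open>At a reducible crossing, the smoothing separating the two corners that lie in a common
  region.\<close>

definition smooth :: "'d \<Rightarrow> 'd" where
  "smooth d = (if F (\<sigma> (\<sigma> d)) = F d then \<sigma> d else \<sigma> (\<sigma> (\<sigma> d)))"

lemma smooth_mem_V: "d \<in> H \<Longrightarrow> smooth d \<in> V d"
  unfolding smooth_def using V_eq by auto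

lemma smooth_neq: "d \<in> H \<Longrightarrow> smooth d \<noteq> d"
  unfolding smooth_def using \<sigma>_distinct by (metis (full_types))

lemma smooth_smooth:
  assumes d: "d \<in> H" and red: "\<not> irreducible_at d" shows "smooth (smooth d) = d"
proof (cases "F (\<sigma> (\<sigma> d)) = F d")
  case True
  thus ?thesis
    using F_\<sigma>_\<sigma>_\<sigma>_neq_if_F_\<sigma>_\<sigma>_eq[OF d True] \<sigma>_\<sigma>_\<sigma>_\<sigma>[OF d] unfolding smooth_def by simp
next
  case False
  hence "F (\<sigma> (\<sigma> (\<sigma> (\<sigma> (\<sigma> d))))) = F (\<sigma> (\<sigma> (\<sigma> d)))"
    using red \<sigma>_\<sigma>_\<sigma>_\<sigma>[OF d] unfolding irreducible_at_def by simp
  thus ?thesis using False \<sigma>_\<sigma>_\<sigma>_\<sigma>[OF d] unfolding smooth_def by simp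
qed

lemma even_cycle_smooth:
  assumes Z: "even_cycle Z" and d: "d \<in> H" "\<not> irreducible_at d" "d \<in> Z"
  shows "smooth d \<in> Z"
proof (cases "F (\<sigma> (\<sigma> d)) = F d")
  case True
  thus ?thesis using even_cycle_mem_\<sigma>_iff[OF Z d(1)] d(3) unfolding smooth_def by simp
next
  case False
  hence "F (\<sigma> (\<sigma> (\<sigma> (\<sigma> (\<sigma> d))))) = F (\<sigma> (\<sigma> (\<sigma> d)))"
    using d(2) \<sigma>_\<sigma>_\<sigma>_\<sigma>[OF d(1)] unfolding irreducible_at_def by simp
  hence "\<sigma> (\<sigma> (\<sigma> (\<sigma> d))) \<in> Z \<longleftrightarrow> \<sigma> (\<sigma> (\<sigma> d)) \<in> Z"
    using even_cycle_mem_\<sigma>_iff[OF Z] d(1) \<sigma>_in by blast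
  thus ?thesis using False d \<sigma>_\<sigma>_\<sigma>_\<sigma> unfolding smooth_def by simp
qed

definition reducible_vertices :: "'d set set" where
  "reducible_vertices = {V x | x. x \<in> H \<and> \<not> irreducible_at x}"

definition smoothing :: "'d set set \<Rightarrow> 'd \<Rightarrow> 'd" where
  "smoothing T d = (if V d \<in> T then smooth d else \<sigma> (\<sigma> d))"

lemma reducible_vertices_iff: "d \<in> H \<Longrightarrow> V d \<in> reducible_vertices \<longleftrightarrow> \<not> irreducible_at d"
  unfolding reducible_vertices_def using irreducible_at_if_mem_V vertex.orb_self by blast

lemma transition_smoothing:
  assumes "T \<subseteq> reducible_vertices" shows "transition (smoothing T)"
  unfolding transition_def
proof
  fix d assume d: "d \<in> H"
  show "smoothing T d \<in> V d \<and> smoothing T d \<noteq> d \<and> smoothing T (smoothing T d) = d"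
  proof (cases "V d \<in> T")
    case True
    have red: "\<not> irreducible_at d" using reducible_vertices_iff[OF d] True assms by blast
    have "V (smooth d) = V d" using V_eq_if_mem[OF d smooth_mem_V[OF d]] .
    thus ?thesis
      unfolding smoothing_def using True smooth_mem_V smooth_neq smooth_smooth d red by simp
  next
    case False
    have "V (\<sigma> (\<sigma> d)) = V d" using V_\<sigma>[OF \<sigma>_in[OF d]] V_\<sigma>[OF d] by simp
    thus ?thesis
      unfolding smoothing_def using False V_eq[OF d] \<sigma>_distinct[OF d] \<sigma>_\<sigma>_\<sigma>_\<sigma>[OF d] by simp
  qed
qed

lemma smoothed_vertex_separates:
  assumes q: "transition q" and h: "h \<in> H" "\<not> irreducible_at h"
    and smoothed: "\<And>d. d \<in> V h \<Longrightarrow> q d = smooth d"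
    and x: "x \<in> V h" "walk q h x"
  shows "x = h \<or> x = smooth h"
proof -
  interpret opened: cut_transition H \<sigma> \<alpha> q h using q h by unfold_locales
  let ?Y = "orb opened.arc_step h"
  have h_Y: "h \<in> ?Y" by (rule opened.arc.orb_self)
  have "smooth h \<in> ?Y" using even_cycle_smooth[OF opened.even_cycle_arc[OF vertex.orb_self] h h_Y] .
  hence "smooth h = opened.arc_end h"
    using opened.arc_Int_V[OF vertex.orb_self] smooth_mem_V[OF h(1)] smooth_neq[OF h(1)] by blast
  hence Y_V: "?Y \<inter> V h = {h, smooth h}" using opened.arc_Int_V[OF vertex.orb_self] by simp
  have "\<alpha> z \<in> ?Y \<and> q z \<in> ?Y" if z: "z \<in> ?Y" for z
  proof
    show "\<alpha> z \<in> ?Y" using opened.\<alpha>_in_arc[OF vertex.orb_self z] .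
    show "q z \<in> ?Y"
    proof (cases "z \<in> V h")
      case True
      hence "z = h \<or> z = smooth h" using Y_V z by blast
      thus ?thesis using smoothed True h_Y \<open>smooth h \<in> ?Y\<close> smooth_smooth[OF h] by auto
    next
      case False
      thus ?thesis using opened.cut_in_arc[OF vertex.orb_self z] unfolding opened.cut_def by simp
    qed
  qed
  hence "x \<in> ?Y" using walk_closed[OF x(2) h_Y] by blast
  thus ?thesis using Y_V x(1) by blast
qed

text \<open>If the straight transition at \<open>e\<close> leaves \<open>e\<close> and \<open>\<sigma> e\<close> on different circles, the other
  smoothing at \<open>e\<close> merges these two circles into one.\<close>

definition rewire :: "('d \<Rightarrow> 'd) \<Rightarrow> 'd \<Rightarrow> 'd \<Rightarrow> 'd" where
  "rewire q e d =
    (if d \<in> {e, \<sigma> (\<sigma> e)} then \<sigma> d else if d \<in> {\<sigma> e, \<sigma> (\<sigma> (\<sigma> e))} then \<sigma> (\<sigma> (\<sigma> d)) else q d)"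

lemma rewire_eq: "e \<in> H \<Longrightarrow> d \<notin> V e \<Longrightarrow> rewire q e d = q d"
  unfolding rewire_def using V_eq by auto

lemma transition_rewire:
  assumes q: "transition q" and e: "e \<in> H" shows "transition (rewire q e)"
  unfolding transition_def
proof
  fix d assume d: "d \<in> H"
  show "rewire q e d \<in> V d \<and> rewire q e d \<noteq> d \<and> rewire q e (rewire q e d) = d"
  proof (cases "d \<in> V e")
    case True
    hence "V d = V e" using V_eq_if_mem[OF e] by blast
    thus ?thesis using True V_eq[OF e] \<sigma>_distinct[OF e] \<sigma>_\<sigma>_\<sigma>_\<sigma>[OF e]
      unfolding rewire_def by auto
  next
    case False
    thus ?thesis using transitionD[OF q d] transition_not_mem_V[OF q d e] rewire_eq[OF e] by simp
  qed
qed

lemma walk_rewire_corner: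
  assumes q: "transition q" and e: "e \<in> H"
    and straight: "\<And>d. d \<in> V e \<Longrightarrow> q d = \<sigma> (\<sigma> d)" and apart: "\<not> walk q e (\<sigma> e)"
    and z: "z \<in> V e"
  shows "walk (rewire q e) e z"
proof -
  interpret opened: cut_transition H \<sigma> \<alpha> q e using q e by unfold_locales
  have "walk (rewire q e) e (opened.arc_end e)"
    using opened.walk_along_arc[OF vertex.orb_self] rewire_eq[OF e] unfolding opened.arc_end_def
    by blast
  hence "walk (rewire q e) e (\<sigma> (\<sigma> e))" using opened.arc_end_eq_\<sigma>_\<sigma>[OF straight apart] by simp
  moreover have "walk (rewire q e) e (\<sigma> e)"
    "walk_step (rewire q e) (\<sigma> (\<sigma> e)) (\<sigma> (\<sigma> (\<sigma> e)))"
    unfolding walk_step_def rewire_def by auto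
  ultimately show ?thesis using z V_eq[OF e] by (auto intro: rtranclp.rtrancl_into_rtrancl)
qed

lemma walk_rewire:
  assumes q: "transition q" and e: "e \<in> H"
    and straight: "\<And>d. d \<in> V e \<Longrightarrow> q d = \<sigma> (\<sigma> d)" and apart: "\<not> walk q e (\<sigma> e)"
    and a: "a \<in> V e" and walk: "walk q a x"
  shows "walk (rewire q e) e x"
  using walk
proof (induction rule: rtranclp_induct)
  case base
  thus ?case using walk_rewire_corner[OF q e straight apart a] .
next
  case (step x z)
  have "x \<in> H" using walk_in[OF q _ step.hyps(1)] a V_subset[OF e] by blast
  show ?case
  proof (cases "x \<in> V e")
    case True
    hence "z = \<alpha> x \<or> z \<in> V e"
      using step.hyps(2) straight[OF True] V_eq_if_mem[OF e True] V_eq[OF \<open>x \<in> H\<close>]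
      unfolding walk_step_def by auto
    moreover have "walk_step (rewire q e) x (\<alpha> x)" unfolding walk_step_def by simp
    ultimately show ?thesis
      using step.IH walk_rewire_corner[OF q e straight apart] by (auto intro: rtranclp.rtrancl_into_rtrancl)
  next
    case False
    hence "walk_step (rewire q e) x z" using step.hyps(2) rewire_eq[OF e] unfolding walk_step_def by auto
    with step.IH show ?thesis by (rule rtranclp.rtrancl_into_rtrancl)
  qed
qed

text \<open>Re-smoothing \<open>e\<close> joins the walks from \<open>e\<close> and from \<open>\<sigma> e\<close>, and a smoothed crossing
  keeps its two smoothing pairs on different circles.\<close>

lemma smoothed_vertex_reached_from_both_sides:
  assumes q: "transition q" and e: "e \<in> H"
    and straight: "\<And>d. d \<in> V e \<Longrightarrow> q d = \<sigma> (\<sigma> d)" and apart: "\<not> walk q e (\<sigma> e)"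
    and h: "h \<in> H" "\<not> irreducible_at h" "V h \<noteq> V e" and smoothed: "\<And>d. d \<in> V h \<Longrightarrow> q d = smooth d"
    and reach: "walk q e h" "h' \<in> V h" "walk q (\<sigma> e) h'"
  shows "h' = h \<or> h' = smooth h"
proof -
  let ?q = "rewire q e"
  have "walk ?q e h" "walk ?q e h'"
    using walk_rewire[OF q e straight apart] reach vertex.orb_self V_eq[OF e] by auto
  hence "walk ?q h h'"
    using walk_sym[OF transition_rewire[OF q e] e] by (meson rtranclp_trans)
  moreover have "?q d = smooth d" if "d \<in> V h" for d
    using that smoothed rewire_eq[OF e] V_eq_if_mem h(1,3) e by metis
  ultimately show ?thesis
    using smoothed_vertex_separates[OF transition_rewire[OF q e] h(1,2)] reach(2) by blast
qed

lemma walk_smoothing_insert: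
  assumes T: "T \<subseteq> reducible_vertices" and u: "u \<in> reducible_vertices"
    and IH: "\<And>e. e \<in> H \<Longrightarrow> irreducible_at e \<Longrightarrow> walk (smoothing T) e (\<sigma> e)"
    and e: "e \<in> H" "irreducible_at e"
  shows "walk (smoothing (insert u T)) e (\<sigma> e)"
proof (rule ccontr)
  let ?p = "smoothing T" and ?p1 = "smoothing (insert u T)"
  assume apart: "\<not> walk ?p1 e (\<sigma> e)"
  have p: "transition ?p" and p1: "transition ?p1" using transition_smoothing T u by auto
  have \<sigma>e: "\<sigma> e \<in> H" using \<sigma>_in[OF e(1)] .
  have agree: "?p1 d = ?p d" if "d \<in> H" "d \<notin> u" for d
    using that vertex.orb_self unfolding smoothing_def by (metis insert_iff)
  obtain h where h: "h \<in> u" "walk ?p1 e h"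
    using walk_if_agree[OF p e(1) IH[OF e] agree] apart by blast
  have "\<not> walk ?p1 (\<sigma> e) e" using walk_sym[OF p1 \<sigma>e] apart by blast
  then obtain h' where h': "h' \<in> u" "walk ?p1 (\<sigma> e) h'"
    using walk_if_agree[OF p \<sigma>e walk_sym[OF p e(1) IH[OF e]] agree] by blast
  obtain x where "x \<in> H" "u = V x" using u unfolding reducible_vertices_def by blast
  hence h_in: "h \<in> H" and V_h: "V h = u" using h(1) V_subset V_eq_if_mem by blast+
  hence red: "\<not> irreducible_at h" using u reducible_vertices_iff by blast
  have smoothed: "?p1 d = smooth d" if "d \<in> V h" for d
    using that V_eq_if_mem[OF h_in] V_h unfolding smoothing_def by simp
  have "walk_step ?p1 h (smooth h)" using smoothed[OF vertex.orb_self] unfolding walk_step_def by simp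
  hence "walk ?p1 e (smooth h)" using h(2) by (rule rtranclp.rtrancl_into_rtrancl[rotated])
  hence new: "h' \<noteq> h" "h' \<noteq> smooth h"
    using h(2) h'(2) apart walk_sym[OF p1 \<sigma>e] by (metis rtranclp_trans walk_sym[OF p1 e(1)])+
  have e_straight: "V e \<notin> insert u T" using reducible_vertices_iff[OF e(1)] e(2) T u by blast
  have "?p1 d = \<sigma> (\<sigma> d)" if "d \<in> V e" for d
    using that V_eq_if_mem[OF e(1)] e_straight unfolding smoothing_def by simp
  from smoothed_vertex_reached_from_both_sides[OF p1 e(1) this apart h_in red _ smoothed h(2) _ h'(2)]
  show False using V_h e_straight h'(1) new by blast
qed

theorem walk_smoothing_\<sigma>:
  assumes "e \<in> H" "irreducible_at e"
  shows "walk (smoothing reducible_vertices) e (\<sigma> e)"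
proof -
  have "finite reducible_vertices" unfolding reducible_vertices_def using finite_H by auto
  moreover have "\<And>e. e \<in> H \<Longrightarrow> irreducible_at e \<Longrightarrow> walk (smoothing T) e (\<sigma> e)"
    if "finite T" "T \<subseteq> reducible_vertices" for T
    using that
  proof (induction T rule: finite_induct)
    case empty
    have "\<And>a b. straight_step \<sigma> \<alpha> a b \<longrightarrow> walk_step (smoothing {}) a b"
      unfolding straight_step_def walk_step_def smoothing_def by auto
    note straight_walk = mono_rtranclp[OF this, rule_format]
    show ?case using empty.prems(1) by (intro straight_walk connected \<sigma>_in)
  next
    case (insert u T)
    thus ?case using walk_smoothing_insert by simp
  qed
  ultimately show ?thesis using assms by blast
qed

end

section \<open>The region select game\<close>

lemma not_zero_divisor_mod_1: "\<not> zero_divisor_mod m 1"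
  unfolding zero_divisor_mod_def by simp

lemma dvd_cancel_if_not_zero_divisor_mod:
  "\<not> zero_divisor_mod m c \<Longrightarrow> m dvd c * b \<Longrightarrow> m dvd b"
  unfolding zero_divisor_mod_def cong_0_iff by blast

locale region_game = knot_map H \<sigma> \<alpha> for H :: "'d set" and \<sigma> \<alpha> +
  fixes k :: enat and a :: "'d set \<Rightarrow> 'd set \<Rightarrow> int" and l :: "'d set \<Rightarrow> int"
  assumes game_version: "game_version k H \<sigma> \<alpha> a" and null: "null_pattern k H \<sigma> \<alpha> a l"
begin

abbreviation m :: int where "m \<equiv> modulus k"

lemma null_at:
  assumes d: "d \<in> H"
  shows "m dvd (\<Sum>r\<in>{F d, F (\<sigma> d), F (\<sigma> (\<sigma> d)), F (\<sigma> (\<sigma> (\<sigma> d)))}. a (V d) r * l r)"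
proof -
  have "[game_apply H \<sigma> \<alpha> a l (V d) = 0] (mod m)"
    using null d unfolding null_pattern_def dvertices_eq by blast
  thus ?thesis unfolding game_apply_def incident_regions[OF d] cong_0_iff .
qed

lemma increment_irreducible:
  assumes d: "d \<in> H" and irr: "irreducible_at d"
  obtains c where "\<not> zero_divisor_mod m c"
    "\<And>r. r \<in> {F d, F (\<sigma> d), F (\<sigma> (\<sigma> d)), F (\<sigma> (\<sigma> (\<sigma> d)))} \<Longrightarrow> m dvd (a (V d) r - c)"
proof -
  have V: "V d \<in> dvertices H \<sigma>" and irr_V: "irreducible_vertex H \<sigma> \<alpha> (V d)"
    using d irreducible_vertex_iff[OF d] irr unfolding dvertices_eq by auto
  have incident: "r \<in> dregions H \<sigma> \<alpha> \<and> incident (V d) r"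
    if "r \<in> {F d, F (\<sigma> d), F (\<sigma> (\<sigma> d)), F (\<sigma> (\<sigma> (\<sigma> d)))}" for r
    using that incident_regions[OF d] by blast
  show ?thesis
  proof (cases "k = \<infinity>")
    case True
    hence "a (V d) r = 1" if "r \<in> {F d, F (\<sigma> d), F (\<sigma> (\<sigma> d)), F (\<sigma> (\<sigma> (\<sigma> d)))}" for r
      using game_version V irr_V incident[OF that] unfolding game_version_def by auto
    thus ?thesis using that[OF not_zero_divisor_mod_1] by simp
  next
    case False
    hence "\<forall>v\<in>dvertices H \<sigma>. irreducible_vertex H \<sigma> \<alpha> v \<longrightarrow> (\<exists>c. \<not> zero_divisor_mod m c \<and>
        (\<forall>r\<in>dregions H \<sigma> \<alpha>. incident v r \<longrightarrow> [a v r = c] (mod m)))"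
      using game_version unfolding game_version_def by simp
    then obtain c where "\<not> zero_divisor_mod m c"
        "\<forall>r\<in>dregions H \<sigma> \<alpha>. incident (V d) r \<longrightarrow> [a (V d) r = c] (mod m)"
      using V irr_V by blast
    thus ?thesis using that incident by (simp add: cong_iff_dvd_diff)
  qed
qed

lemma increment_reducible:
  assumes d: "d \<in> H" "\<not> irreducible_at d" and x: "x \<in> H" and one: "card (V d \<inter> F x) = 1"
  shows "\<not> zero_divisor_mod m (a (V d) (F x))"
proof -
  have "V d \<in> dvertices H \<sigma>" "F x \<in> dregions H \<sigma> \<alpha>" "incident (V d) (F x)"
    using d x one unfolding dvertices_eq dregions_eq incident_def by auto
  thus ?thesis
    using game_version one irreducible_vertex_iff[OF d(1)] d(2) not_zero_divisor_mod_1
    unfolding game_version_def by (cases "k = \<infinity>") auto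
qed

lemma sum_around_irreducible:
  assumes d: "d \<in> H" and irr: "irreducible_at d"
  shows "m dvd l (F d) + l (F (\<sigma> d)) + l (F (\<sigma> (\<sigma> d))) + l (F (\<sigma> (\<sigma> (\<sigma> d))))"
proof -
  let ?R = "{F d, F (\<sigma> d), F (\<sigma> (\<sigma> d)), F (\<sigma> (\<sigma> (\<sigma> d)))}"
  obtain c where c: "\<not> zero_divisor_mod m c" "\<And>r. r \<in> ?R \<Longrightarrow> m dvd (a (V d) r - c)"
    using increment_irreducible[OF d irr] by blast
  have "m dvd (\<Sum>r\<in>?R. (a (V d) r - c) * l r)" by (intro dvd_sum dvd_mult2 c(2))
  with null_at[OF d] have "m dvd (\<Sum>r\<in>?R. a (V d) r * l r) - (\<Sum>r\<in>?R. (a (V d) r - c) * l r)"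
    by (rule dvd_diff)
  also have "\<dots> = c * (\<Sum>r\<in>?R. l r)"
    by (simp add: sum_subtractf[symmetric] sum_distrib_left algebra_simps)
  finally have "m dvd (\<Sum>r\<in>?R. l r)" by (rule dvd_cancel_if_not_zero_divisor_mod[OF c(1)])
  moreover have "distinct [F d, F (\<sigma> d), F (\<sigma> (\<sigma> d)), F (\<sigma> (\<sigma> (\<sigma> d)))]"
    using irr F_\<sigma>_neq_around[OF d] unfolding irreducible_at_def by auto
  hence "(\<Sum>r\<in>?R. l r) = l (F d) + l (F (\<sigma> d)) + l (F (\<sigma> (\<sigma> d))) + l (F (\<sigma> (\<sigma> (\<sigma> d))))"
    using sum.distinct_set_conv_list[of _ l] by (simp add: algebra_simps)
  ultimately show ?thesis by simp
qed

lemma reducible_fourth: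
  assumes d: "d \<in> H" "\<not> irreducible_at d" and eq: "F (\<sigma> (\<sigma> d)) = F d"
    and zero: "m dvd l (F d)" "m dvd l (F (\<sigma> d))"
  shows "m dvd l (F (\<sigma> (\<sigma> (\<sigma> d))))"
proof -
  let ?d3 = "\<sigma> (\<sigma> (\<sigma> d))"
  have neq: "F ?d3 \<noteq> F (\<sigma> d)" "F (\<sigma> d) \<noteq> F d" "F d \<noteq> F ?d3"
    using F_\<sigma>_\<sigma>_\<sigma>_neq_if_F_\<sigma>_\<sigma>_eq[OF d(1) eq] F_\<sigma>_neq_around[OF d(1)] by auto
  have "V d \<inter> F ?d3 = {?d3}"
    using V_Int_F[OF d(1) \<sigma>_in[OF \<sigma>_in[OF \<sigma>_in[OF d(1)]]]] neq eq by auto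
  hence cancel: "\<not> zero_divisor_mod m (a (V d) (F ?d3))"
    using increment_reducible[OF d] \<sigma>_in d(1) by simp
  have "(\<Sum>r\<in>{F d, F (\<sigma> d), F (\<sigma> (\<sigma> d)), F ?d3}. a (V d) r * l r)
      = a (V d) (F d) * l (F d) + a (V d) (F (\<sigma> d)) * l (F (\<sigma> d)) + a (V d) (F ?d3) * l (F ?d3)"
    using eq neq by (simp add: insert_commute)
  hence "m dvd a (V d) (F d) * l (F d) + a (V d) (F (\<sigma> d)) * l (F (\<sigma> d)) + a (V d) (F ?d3) * l (F ?d3)"
    using null_at[OF d(1)] by simp
  hence "m dvd a (V d) (F ?d3) * l (F ?d3)" using zero by (simp add: dvd_add_right_iff)
  thus ?thesis by (rule dvd_cancel_if_not_zero_divisor_mod[OF cancel])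
qed

definition edge_sum :: "'d \<Rightarrow> int" where
  "edge_sum d = l (F d) + l (F (\<sigma> d))"

lemma edge_sum_\<alpha>: "d \<in> H \<Longrightarrow> edge_sum (\<alpha> d) = edge_sum d"
  unfolding edge_sum_def using F_\<alpha> F_\<sigma>_\<alpha> by simp

lemma edge_sum_smooth:
  assumes d: "d \<in> H" "\<not> irreducible_at d" shows "edge_sum (smooth d) = edge_sum d"
  using d \<sigma>_\<sigma>_\<sigma>_\<sigma>[OF d(1)] unfolding edge_sum_def smooth_def irreducible_at_def by auto

lemma edge_sum_walk:
  assumes walk: "walk (smoothing reducible_vertices) d z" and d: "d \<in> H" and zero: "m dvd edge_sum d"
  shows "m dvd edge_sum z"
  using walk
proof (induction rule: rtranclp_induct)
  case (step y z)
  have y: "y \<in> H" using walk_in[OF transition_smoothing d step.hyps(1)] by blast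
  from step.hyps(2) consider "z = \<alpha> y" | "z = smoothing reducible_vertices y"
    unfolding walk_step_def by blast
  thus ?case
  proof cases
    case 2
    show ?thesis
    proof (cases "irreducible_at y")
      case True
      hence "z = \<sigma> (\<sigma> y)" using 2 reducible_vertices_iff[OF y] unfolding smoothing_def by simp
      moreover have "m dvd edge_sum y + edge_sum (\<sigma> (\<sigma> y))"
        using sum_around_irreducible[OF y True] \<sigma>_\<sigma>_\<sigma>_\<sigma>[OF y] unfolding edge_sum_def
        by (simp add: add.assoc)
      ultimately show ?thesis using step.IH by (simp add: dvd_add_right_iff)
    next
      case False
      thus ?thesis using 2 step.IH edge_sum_smooth[OF y] reducible_vertices_iff[OF y]
        unfolding smoothing_def by simp
    qed
  qed (use step.IH edge_sum_\<alpha>[OF y] in simp)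
qed (use zero in simp)

definition vanishes_at :: "'d \<Rightarrow> bool" where
  "vanishes_at d \<longleftrightarrow> m dvd l (F d) \<and> m dvd l (F (\<sigma> d))"

lemma vanishes_at_\<sigma>_\<sigma>_irreducible:
  assumes d: "d \<in> H" "irreducible_at d" and zero: "m dvd l (F d)" "m dvd l (F (\<sigma> d))"
  shows "m dvd l (F (\<sigma> (\<sigma> d)))" "m dvd l (F (\<sigma> (\<sigma> (\<sigma> d))))"
proof -
  have "m dvd edge_sum (\<sigma> d)"
    using edge_sum_walk[OF walk_smoothing_\<sigma>[OF d] d(1)] zero unfolding edge_sum_def by simp
  thus "m dvd l (F (\<sigma> (\<sigma> d)))" using zero unfolding edge_sum_def by (simp add: dvd_add_right_iff)
  thus "m dvd l (F (\<sigma> (\<sigma> (\<sigma> d))))"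
    using sum_around_irreducible[OF d] zero by (simp add: dvd_add_right_iff)
qed

lemma vanishes_at_\<sigma>_\<sigma>_reducible:
  assumes d: "d \<in> H" "\<not> irreducible_at d" and zero: "m dvd l (F d)" "m dvd l (F (\<sigma> d))"
  shows "m dvd l (F (\<sigma> (\<sigma> d))) \<and> m dvd l (F (\<sigma> (\<sigma> (\<sigma> d))))"
proof (cases "F (\<sigma> (\<sigma> d)) = F d")
  case True
  thus ?thesis using reducible_fourth[OF d True zero] zero by simp
next
  case False
  let ?d3 = "\<sigma> (\<sigma> (\<sigma> d))"
  have d3: "?d3 \<in> H" "\<not> irreducible_at ?d3"
    using \<sigma>_in d irreducible_at_if_mem_V[OF d(1), of ?d3] V_eq[OF d(1)] by auto
  have eq: "F (\<sigma> (\<sigma> ?d3)) = F ?d3"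
    using False d(2) \<sigma>_\<sigma>_\<sigma>_\<sigma>[OF d(1)] unfolding irreducible_at_def by simp
  have "m dvd l (F ?d3)" "m dvd l (F (\<sigma> ?d3))" using eq zero \<sigma>_\<sigma>_\<sigma>_\<sigma>[OF d(1)] by simp_all
  thus ?thesis using reducible_fourth[OF d3 eq] \<sigma>_\<sigma>_\<sigma>_\<sigma>[OF d(1)] \<sigma>_\<sigma>_\<sigma>_\<sigma>[OF \<sigma>_in[OF d(1)]] by simp
qed

lemma vanishes_at_\<sigma>_\<sigma>: "d \<in> H \<Longrightarrow> vanishes_at d \<Longrightarrow> vanishes_at (\<sigma> (\<sigma> d))"
  unfolding vanishes_at_def
  using vanishes_at_\<sigma>_\<sigma>_irreducible vanishes_at_\<sigma>_\<sigma>_reducible \<sigma>_\<sigma>_\<sigma>_\<sigma> by (metis (full_types))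

lemma vanishes_at_\<alpha>: "d \<in> H \<Longrightarrow> vanishes_at d \<Longrightarrow> vanishes_at (\<alpha> d)"
  unfolding vanishes_at_def using F_\<alpha> F_\<sigma>_\<alpha> by simp

lemma vanishes_everywhere:
  assumes d: "d \<in> H" "vanishes_at d" and x: "x \<in> H" shows "vanishes_at x"
  using connected[OF d(1) x]
proof (induction rule: rtranclp_induct)
  case (step y z)
  have "y \<in> H" using straight_steps_in[OF d(1) step.hyps(1)] .
  thus ?case using step vanishes_at_\<sigma>_\<sigma> vanishes_at_\<alpha> unfolding straight_step_def by auto
qed (use d in simp)

lemma null_pattern_vanishes:
  assumes r12: "r1 \<in> dregions H \<sigma> \<alpha>" "r2 \<in> dregions H \<sigma> \<alpha>" and adj: "adjacent H \<alpha> r1 r2"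
    and zero: "[l r1 = 0] (mod m)" "[l r2 = 0] (mod m)" and r: "r \<in> dregions H \<sigma> \<alpha>"
  shows "[l r = 0] (mod m)"
proof -
  obtain d where d: "d \<in> H" "d \<in> r1" "\<alpha> d \<in> r2" using adj unfolding adjacent_def by blast
  obtain x1 x2 where "x1 \<in> H" "r1 = F x1" "x2 \<in> H" "r2 = F x2" using r12 unfolding dregions_eq by auto
  hence "F d = r1" "F (\<sigma> d) = r2"
    using d mem_F_iff F_\<alpha>[OF d(1)] \<alpha>_in[OF d(1)] by auto
  hence "vanishes_at d" using zero unfolding vanishes_at_def cong_0_iff by simp
  moreover obtain x where x: "x \<in> H" "r = F x" using r unfolding dregions_eq by auto
  ultimately have "vanishes_at x" using vanishes_everywhere[OF d(1)] by blast
  thus ?thesis unfolding vanishes_at_def cong_0_iff x(2) by simp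
qed

end

theorem mainTheorem6:
  fixes H :: "'d set" and \<sigma> \<alpha> :: "'d \<Rightarrow> 'd" and k :: enat
    and a :: "'d set \<Rightarrow> 'd set \<Rightarrow> int" and l :: "'d set \<Rightarrow> int"
    and r1 r2 :: "'d set"
  assumes "knot_diagram H \<sigma> \<alpha>"
    and "2 \<le> k"
    and "game_version k H \<sigma> \<alpha> a"
    and "null_pattern k H \<sigma> \<alpha> a l"
    and "r1 \<in> dregions H \<sigma> \<alpha>" and "r2 \<in> dregions H \<sigma> \<alpha>" and "r1 \<noteq> r2"
    and "adjacent H \<alpha> r1 r2"
    and "[l r1 = 0] (mod modulus k)" and "[l r2 = 0] (mod modulus k)"
  shows "\<forall>r\<in>dregions H \<sigma> \<alpha>. [l r = 0] (mod modulus k)"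
proof -
  interpret region_game H \<sigma> \<alpha> k a l
    using assms(1,3,4) by unfold_locales
  show ?thesis using null_pattern_vanishes assms(5,6,8-10) by blast
qed

end
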